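(* Suppose $\gamma=1$ and $0<q<1$. The Taylor coefficients $q_k$ of $\log\mathbb{E}[z^B]=\sum_{k\ge0}q_kz^k$ around $z=0$ are $$q_0=-\frac{\theta}{q}\log\left(1+\frac{\phi q}{1-q}\right),\qquad q_k=\frac{\theta\phi^k}{[1-q(1-\phi)]^k}\left[\frac1k-\frac{\phi}{k+1}\,{}_2F_1\!\left(1,1;2+k;-\frac{\phi q}{1-q}\right)\right]\quad(k\ge1),$$ where $\phi=1-1/N$ and $\theta=N\mu$. If $q=0$, then $q_0=-\theta\phi$ and $q_k=\theta\left(\frac{\phi^k}{k}-\frac{\phi^{k+1}}{k+1}\right)$ for $k\ge1$. In all cases $\mathbb{P}(B=0)=e^{q_0}$ and $\mathbb{P}(B=n)=\frac1n\sum_{k=0}^{n-1}(n-k)q_{n-k}\mathbb{P}(B=k)$ for $n\ge1$.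
   Context: Model: fix $\delta>0$, $\nu>0$ and $\alpha>\beta\ge 0$, and put $\lambda=\alpha-\beta>0$. The wild-type population is deterministic, of size $e^{\delta t}$ at time $t\ge0$. Mutants arise at the points of an inhomogeneous Poisson process on $[0,\infty)$ with intensity $\nu e^{\delta t}$. Each mutant arising at time $s$ founds a clone that evolves as a linear birth–death process started from one cell, with per-capita birth rate $\alpha$ and death rate $\beta$. Clones are independent of each other and of the Poisson process. For $N>1$ let $\tau=\log N/\delta$, and let $B$ be the total number of mutant cells alive at time $\tau$. Notation: $q=\beta/\alpha\in[0,1)$, $\gamma=\delta/\lambda$, $\mu=\nu/\alpha$. ${}_2F_1$ denotes the Gauss hypergeometric function. *)

theory Defs
  imports "HOL-Analysis.Analysis"
begin

text \<open>Gauss hypergeometric function 2F1(a,b;c;x), given by Euler's integral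
  representation, which is the principal branch (analytic continuation of the
  power series) on x < 1, valid for c > b > 0.\<close>
definition hyp2f1 :: "real \<Rightarrow> real \<Rightarrow> real \<Rightarrow> real \<Rightarrow> real" where
  "hyp2f1 a b c x =
     Gamma c / (Gamma b * Gamma (c - b)) *
     integral {0..1} (\<lambda>t. t powr (b - 1) * (1 - t) powr (c - b - 1) * (1 - x * t) powr (- a))"

text \<open>Law at time t of a linear birth-death process (birth rate alpha, death rate beta,
  alpha > beta) started from a single cell: probability of n cells alive at time t.\<close>
definition bd_prob :: "real \<Rightarrow> real \<Rightarrow> real \<Rightarrow> nat \<Rightarrow> real" where
  "bd_prob \<alpha> \<beta> t n =
     (let E = exp ((\<alpha> - \<beta>) * t);
          p0 = \<beta> * (E - 1) / (\<alpha> * E - \<beta>);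
          \<xi> = \<alpha> * (E - 1) / (\<alpha> * E - \<beta>)
      in if n = 0 then p0 else (1 - p0) * (1 - \<xi>) * \<xi> ^ (n - 1))"

definition conv :: "(nat \<Rightarrow> real) \<Rightarrow> (nat \<Rightarrow> real) \<Rightarrow> nat \<Rightarrow> real" where
  "conv f g n = (\<Sum>k\<le>n. f k * g (n - k))"

fun conv_pow :: "(nat \<Rightarrow> real) \<Rightarrow> nat \<Rightarrow> nat \<Rightarrow> real" where
  "conv_pow f 0 = (\<lambda>n. if n = 0 then 1 else 0)"
| "conv_pow f (Suc m) = conv f (conv_pow f m)"

text \<open>Total mutation intensity on [0,tau] (mean number of mutants arising by time tau).\<close>
definition mut_mass :: "real \<Rightarrow> real \<Rightarrow> real \<Rightarrow> real" where
  "mut_mass \<delta> \<nu> \<tau> = integral {0..\<tau>} (\<lambda>s. \<nu> * exp (\<delta> * s))"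

text \<open>Intensity-weighted law of the size at time tau of a clone founded by a mutant:
  integral over the arrival time s of nu e^(delta s) P(X_(tau-s) = n).\<close>
definition clone_weight :: "real \<Rightarrow> real \<Rightarrow> real \<Rightarrow> real \<Rightarrow> real \<Rightarrow> nat \<Rightarrow> real" where
  "clone_weight \<alpha> \<beta> \<delta> \<nu> \<tau> n =
     integral {0..\<tau>} (\<lambda>s. \<nu> * exp (\<delta> * s) * bd_prob \<alpha> \<beta> (\<tau> - s) n)"

text \<open>P(B = n), B = number of mutant cells at time tau = ln N / delta. B is the sum over
  the Poisson-many mutants of independent clone sizes (compound Poisson law).\<close>
definition probB :: "real \<Rightarrow> real \<Rightarrow> real \<Rightarrow> real \<Rightarrow> real \<Rightarrow> nat \<Rightarrow> real" where
  "probB \<alpha> \<beta> \<delta> \<nu> N n =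
     (let \<tau> = ln N / \<delta> in
      exp (- mut_mass \<delta> \<nu> \<tau>) *
      (\<Sum>m. conv_pow (clone_weight \<alpha> \<beta> \<delta> \<nu> \<tau>) m n / fact m))"

definition pgfB :: "real \<Rightarrow> real \<Rightarrow> real \<Rightarrow> real \<Rightarrow> real \<Rightarrow> real \<Rightarrow> real" where
  "pgfB \<alpha> \<beta> \<delta> \<nu> N z = (\<Sum>n. probB \<alpha> \<beta> \<delta> \<nu> N n * z ^ n)"

end

theory Submission
  imports Defs
begin

(* B is the sum, over the Poisson many mutants, of independent clone sizes, and probB is this
   compound Poisson law: P(B = n) = exp(-M) [z^n] exp(W z), where M is the mean number of mutants
   and W z = sum_n w_n z^n collects the intensity-weighted clone-size probabilities
   w_n = clone_weight.  Hence log E z^B = W z - M, and comparing coefficients in z G' = z W' G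
   for G z = E z^B gives the recursion for P(B = n).

   For gamma = 1 the weights are computed in the parameter xi of the clone-size law: a clone of
   age t has P(X_t = 0) = q xi and P(X_t = n) = (1 - q xi)(1 - xi) xi^(n-1), and since
   xi' = alpha (1 - xi)(1 - q xi) and exp(-lambda t) = (1 - xi)/(1 - q xi), substituting x = xi
   turns w_n into theta * integral_0^c P_n(x) / (1 - q x)^2 dx, with c = phi / (1 - q (1 - phi))
   the value of xi at age tau.  For n = 0 this integral is elementary; for n >= 1 the substitution
   x = c (1 - t) makes it Euler's integral for 2F1(1, 1; n + 2; -phi q / (1 - q)). *)

section \<open>Compound Poisson coefficients\<close>

lemma conv_pow_eq_fps_nth: "conv_pow w m n = fps_nth (Abs_fps w ^ m) n"
proof (induction m arbitrary: n)
  case (Suc m)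
  then show ?case
    by (simp add: conv_def fps_mult_nth atLeast0AtMost)
qed simp

lemma conv_pow_at_0: "conv_pow w m 0 = w 0 ^ m"
  by (simp add: conv_pow_eq_fps_nth fps_nth_power_0)

lemma conv_pow_bounds:
  assumes nonneg: "\<And>n. 0 \<le> w n" and le: "\<And>n. w n \<le> K"
  shows "0 \<le> conv_pow w m n \<and> conv_pow w m n \<le> (real (Suc n) * K) ^ m"
proof (induction m arbitrary: n)
  case 0
  show ?case
    by simp
next
  case (Suc m)
  have "0 \<le> K"
    using nonneg[of 0] le[of 0] by linarith
  have term_le: "w i * conv_pow w m (n - i) \<le> K * (real (Suc n) * K) ^ m" for i
  proof -
    have "(real (Suc (n - i)) * K) ^ m \<le> (real (Suc n) * K) ^ m"
      using \<open>0 \<le> K\<close> by (intro power_mono mult_right_mono) auto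
    with Suc.IH[of "n - i"] show ?thesis
      using nonneg[of i] le[of i] by (intro mult_mono) auto
  qed
  have "conv_pow w (Suc m) n \<le> (\<Sum>i\<le>n. K * (real (Suc n) * K) ^ m)"
    unfolding conv_pow.simps conv_def by (intro sum_mono term_le)
  also have "\<dots> = (real (Suc n) * K) ^ Suc m"
    by simp
  finally show ?case
    using Suc.IH nonneg by (auto simp: conv_def intro!: sum_nonneg)
qed

lemma conv_pow_Suc_recurrence:
  assumes "0 < n"
  shows "real n * conv_pow w (Suc m) n =
           real (Suc m) * (\<Sum>k<n. real (n - k) * w (n - k) * conv_pow w m k)"
proof -
  define W where "W = Abs_fps w"
  have "real n * fps_nth (W ^ Suc m) n = fps_nth (fps_deriv (W ^ Suc m)) (n - 1)"
    using assms by (simp add: fps_deriv_nth del: power_Suc)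
  also have "fps_deriv (W ^ Suc m) = fps_const (real (Suc m)) * (W ^ m * fps_deriv W)"
    by (simp only: fps_deriv_power' diff_Suc_1 fps_of_nat mult.assoc mult.commute[of "fps_deriv W"])
  also have "fps_nth \<dots> (n - 1) = real (Suc m) * fps_nth (W ^ m * fps_deriv W) (n - 1)"
    by (rule fps_mult_left_const_nth)
  also have "fps_nth (W ^ m * fps_deriv W) (n - 1) = (\<Sum>k<n. real (n - k) * w (n - k) * fps_nth (W ^ m) k)"
    using assms by (auto simp: fps_mult_nth W_def atLeast0AtMost lessThan_Suc_atMost[symmetric]
        Suc_diff_Suc intro!: sum.cong)
  finally show ?thesis by (simp only: conv_pow_eq_fps_nth W_def)
qed

definition exp_series_coeff :: "(nat \<Rightarrow> real) \<Rightarrow> nat \<Rightarrow> real" where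
  "exp_series_coeff w n = (\<Sum>m. conv_pow w m n / fact m)"

lemma summable_conv_pow_div_fact:
  assumes "\<And>n. 0 \<le> w n" and "\<And>n. w n \<le> K"
  shows "summable (\<lambda>m. conv_pow w m n / fact m)"
proof (rule summable_comparison_test')
  show "summable (\<lambda>m. inverse (fact m) * (real (Suc n) * K) ^ m)"
    by (rule summable_exp)
  show "norm (conv_pow w m n / fact m) \<le> inverse (fact m) * (real (Suc n) * K) ^ m" for m
    using conv_pow_bounds[OF assms, where m = m and n = n] by (simp add: divide_simps)
qed

lemma exp_series_coeff_0: "exp_series_coeff w 0 = exp (w 0)"
  using exp_converges[of "w 0"]
  by (simp add: exp_series_coeff_def conv_pow_at_0 divide_inverse mult.commute sums_iff)

lemma exp_series_coeff_recurrence: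
  assumes "\<And>n. 0 \<le> w n" and "\<And>n. w n \<le> K" and "0 < n"
  shows "real n * exp_series_coeff w n =
           (\<Sum>k<n. real (n - k) * w (n - k) * exp_series_coeff w k)"
proof -
  note summable = summable_conv_pow_div_fact[OF assms(1,2)]
  have "real n * exp_series_coeff w n = (\<Sum>m. real n * (conv_pow w m n / fact m))"
    unfolding exp_series_coeff_def by (intro suminf_mult[symmetric] summable)
  also have "\<dots> = (\<Sum>m. real n * (conv_pow w (Suc m) n / fact (Suc m)))"
    using suminf_split_head[OF summable_mult[OF summable]] assms(3) by simp
  also have "\<dots> = (\<Sum>m. \<Sum>k<n. real (n - k) * w (n - k) * (conv_pow w m k / fact m))"
    using conv_pow_Suc_recurrence[OF assms(3)]
    by (simp add: fact_Suc sum_divide_distrib field_simps del: of_nat_Suc)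
  also have "\<dots> = (\<Sum>k<n. \<Sum>m. real (n - k) * w (n - k) * (conv_pow w m k / fact m))"
    by (intro suminf_sum summable_mult summable)
  also have "\<dots> = (\<Sum>k<n. real (n - k) * w (n - k) * exp_series_coeff w k)"
    unfolding exp_series_coeff_def by (intro sum.cong refl suminf_mult summable)
  finally show ?thesis .
qed

lemma double_series_sums_swap:
  fixes a :: "nat \<Rightarrow> nat \<Rightarrow> real"
  assumes rows: "\<And>m. (\<lambda>n. a m n) sums r m"
    and rows_abs: "\<And>m. (\<lambda>n. \<bar>a m n\<bar>) sums R m" and "summable R"
    and cols: "\<And>n. (\<lambda>m. a m n) sums c n"
  shows "c sums (\<Sum>m. r m)"
proof -
  have "0 \<le> R m" for m
    by (rule sums_le[OF _ sums_zero rows_abs]) simp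
  then have "(\<lambda>(m, n). \<bar>a m n\<bar>) summable_on UNIV \<times> UNIV"
    using rows_abs \<open>summable R\<close>
    by (intro summable_on_SigmaI[where g = R] sums_nonneg_imp_has_sum summable_nonneg_imp_summable_on)
      auto
  then have abs_summable: "(\<lambda>(m, n). norm (a m n)) summable_on UNIV \<times> UNIV"
    by simp
  then obtain S where S: "((\<lambda>(m, n). a m n) has_sum S) (UNIV \<times> UNIV)"
    using abs_summable_summable[of "\<lambda>(m, n). a m n"] by (auto simp: case_prod_unfold summable_on_def)
  have "(r has_sum S) UNIV"
    using S by (rule has_sum_Sigma') (use rows rows_abs in \<open>auto intro: norm_summable_imp_has_sum simp: sums_iff\<close>)
  then have "S = (\<Sum>m. r m)"
    using has_sum_imp_sums sums_unique by blast
  have cols_abs: "summable (\<lambda>m. \<bar>a m n\<bar>)" for n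
  proof -
    have "(\<lambda>(n, m). \<bar>a m n\<bar>) summable_on UNIV \<times> UNIV"
      using abs_summable by (subst summable_on_swap) (simp add: case_prod_unfold)
    then have "(\<lambda>m. \<bar>a m n\<bar>) summable_on UNIV"
      by (rule summable_on_SigmaD1[where f = "\<lambda>n m. \<bar>a m n\<bar>"]) simp
    then show ?thesis
      by (rule summable_on_imp_summable)
  qed
  have "((\<lambda>(n, m). a m n) has_sum S) (UNIV \<times> UNIV)"
    using S by (subst (asm) has_sum_swap) (simp add: case_prod_unfold)
  then have "(c has_sum S) UNIV"
    by (rule has_sum_Sigma') (use cols cols_abs in \<open>auto intro: norm_summable_imp_has_sum\<close>)
  then show ?thesis
    using \<open>S = (\<Sum>m. r m)\<close> has_sum_imp_sums by blast
qed

lemma summable_bounded_power_series: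
  fixes w :: "nat \<Rightarrow> real"
  assumes "\<And>n. \<bar>w n\<bar> \<le> K" and "\<bar>x\<bar> < 1"
  shows "summable (\<lambda>n. w n * x ^ n)"
proof (rule summable_comparison_test')
  show "summable (\<lambda>n. K * \<bar>x\<bar> ^ n)"
    using assms(2) by (intro summable_mult summable_geometric) simp
  show "norm (w n * x ^ n) \<le> K * \<bar>x\<bar> ^ n" for n
    using assms(1)[of n] by (simp add: abs_mult power_abs mult_right_mono)
qed

lemma fps_conv_radius_bounded:
  fixes w :: "nat \<Rightarrow> real"
  assumes "\<And>n. \<bar>w n\<bar> \<le> K"
  shows "1 \<le> fps_conv_radius (Abs_fps w)"
  unfolding fps_conv_radius_def
  by (rule conv_radius_geI_ex') (simp add: summable_bounded_power_series[OF assms])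

lemma sums_conv_pow_power_series:
  fixes w :: "nat \<Rightarrow> real"
  assumes "\<And>n. \<bar>w n\<bar> \<le> K" and "\<bar>x\<bar> < 1"
  shows "(\<lambda>n. conv_pow w m n * x ^ n) sums (\<Sum>n. w n * x ^ n) ^ m"
proof -
  have "ereal (norm x) < 1"
    using assms(2) by simp
  also have "1 \<le> fps_conv_radius (Abs_fps w)"
    by (rule fps_conv_radius_bounded[OF assms(1)])
  finally have radius: "ereal (norm x) < fps_conv_radius (Abs_fps w)" .
  have "(\<lambda>n. fps_nth (Abs_fps w ^ m) n * x ^ n) sums eval_fps (Abs_fps w ^ m) x"
    using radius fps_conv_radius_power[of "Abs_fps w" m] by (intro sums_eval_fps) simp
  moreover have "eval_fps (Abs_fps w ^ m) x = (\<Sum>n. w n * x ^ n) ^ m"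
    unfolding eval_fps_power[OF radius] by (simp add: eval_fps_def)
  ultimately show ?thesis
    by (simp add: conv_pow_eq_fps_nth)
qed

lemma exp_series_coeff_sums:
  assumes nonneg: "\<And>n. 0 \<le> w n" and le: "\<And>n. w n \<le> K" and "\<bar>z\<bar> < 1"
  shows "(\<lambda>n. exp_series_coeff w n * z ^ n) sums exp (\<Sum>n. w n * z ^ n)"
proof -
  have bounded: "\<bar>w n\<bar> \<le> K" for n
    using nonneg[of n] le[of n] by simp
  define a where "a m n = conv_pow w m n / fact m * z ^ n" for m n
  have exp_sums: "(\<lambda>m. y ^ m / fact m) sums exp y" for y :: real
    using exp_converges[of y] by (simp add: divide_inverse ac_simps)
  have "(\<lambda>n. a m n) sums ((\<Sum>n. w n * z ^ n) ^ m / fact m)" for m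
    using sums_divide[OF sums_conv_pow_power_series[where w = w, OF bounded \<open>\<bar>z\<bar> < 1\<close>, where m = m], where c = "fact m"]
    by (simp add: a_def field_simps)
  moreover have "(\<lambda>n. \<bar>a m n\<bar>) sums ((\<Sum>n. w n * \<bar>z\<bar> ^ n) ^ m / fact m)" for m
    using sums_divide[OF sums_conv_pow_power_series[where w = w, OF bounded, where x = "\<bar>z\<bar>" and m = m], where c = "fact m"] \<open>\<bar>z\<bar> < 1\<close>
      conv_pow_bounds[OF nonneg le]
    by (simp add: a_def abs_mult power_abs field_simps)
  moreover have "summable (\<lambda>m. (\<Sum>n. w n * \<bar>z\<bar> ^ n) ^ m / fact m)"
    using exp_sums by (rule sums_summable)
  moreover have "(\<lambda>m. a m n) sums (exp_series_coeff w n * z ^ n)" for n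
    unfolding a_def exp_series_coeff_def
    by (intro sums_mult2 summable_sums summable_conv_pow_div_fact[OF nonneg le])
  ultimately have "(\<lambda>n. exp_series_coeff w n * z ^ n) sums (\<Sum>m. (\<Sum>n. w n * z ^ n) ^ m / fact m)"
    by (rule double_series_sums_swap)
  then show ?thesis
    using exp_sums sums_unique by metis
qed

lemma compound_poisson_log_coeffs:
  fixes w c :: "nat \<Rightarrow> real"
  assumes nonneg: "\<And>n. 0 \<le> w n" and le: "\<And>n. w n \<le> K"
    and c: "\<And>k. c k = w k - (if k = 0 then M else 0)"
  defines "p \<equiv> \<lambda>n. exp (- M) * exp_series_coeff w n"
  shows "\<bar>z\<bar> < 1 \<Longrightarrow> (\<lambda>k. c k * z ^ k) sums ln (\<Sum>n. p n * z ^ n)"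
    and "p 0 = exp (c 0)"
    and "0 < n \<Longrightarrow> p n = 1 / real n * (\<Sum>k<n. real (n - k) * c (n - k) * p k)"
proof -
  assume "\<bar>z\<bar> < 1"
  have "(\<lambda>n. w n * z ^ n) sums (\<Sum>n. w n * z ^ n)"
    using nonneg le \<open>\<bar>z\<bar> < 1\<close> by (intro summable_sums summable_bounded_power_series) auto
  then have "(\<lambda>k. w k * z ^ k - (if k = 0 then M else 0)) sums ((\<Sum>n. w n * z ^ n) - M)"
    by (intro sums_diff sums_single[where f = "\<lambda>_. M", simplified])
  moreover have "(\<lambda>k. w k * z ^ k - (if k = 0 then M else 0)) = (\<lambda>k. c k * z ^ k)"
    by (auto simp: fun_eq_iff c left_diff_distrib)
  moreover have "(\<Sum>n. p n * z ^ n) = exp (- M) * exp (\<Sum>n. w n * z ^ n)"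
    using sums_mult[OF exp_series_coeff_sums[where w = w, OF nonneg le \<open>\<bar>z\<bar> < 1\<close>], of "exp (- M)"]
    by (simp add: p_def mult.assoc sums_iff)
  moreover have "exp (- M) * exp (\<Sum>n. w n * z ^ n) = exp ((\<Sum>n. w n * z ^ n) - M)"
    by (simp add: exp_diff exp_minus field_simps)
  ultimately show "(\<lambda>k. c k * z ^ k) sums ln (\<Sum>n. p n * z ^ n)"
    by (simp only: ln_exp)
next
  show "p 0 = exp (c 0)"
    by (simp add: p_def c exp_series_coeff_0 exp_diff exp_minus field_simps)
next
  assume "0 < n"
  have "real n * p n = exp (- M) * (real n * exp_series_coeff w n)"
    by (simp add: p_def)
  also have "\<dots> = exp (- M) * (\<Sum>k<n. real (n - k) * w (n - k) * exp_series_coeff w k)"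
    by (simp only: exp_series_coeff_recurrence[where w = w, OF nonneg le \<open>0 < n\<close>])
  also have "\<dots> = (\<Sum>k<n. real (n - k) * c (n - k) * p k)"
    by (simp add: p_def c sum_distrib_left ac_simps)
  finally show "p n = 1 / real n * (\<Sum>k<n. real (n - k) * c (n - k) * p k)"
    using \<open>0 < n\<close> by (simp add: field_simps)
qed

section \<open>The clone-size law of the birth-death process\<close>

lemma fundamental_theorem_of_calculus_real:
  fixes F f :: "real \<Rightarrow> real"
  assumes "a \<le> b" and "\<And>x. x \<in> {a..b} \<Longrightarrow> (F has_real_derivative f x) (at x)"
  shows "(f has_integral (F b - F a)) {a..b}"
  using assms
  by (intro fundamental_theorem_of_calculus)
    (auto simp: has_real_derivative_iff_has_vector_derivative[symmetric] intro: has_field_derivative_at_within)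

lemma mut_mass_eq:
  assumes "\<delta> \<noteq> 0" and "0 \<le> \<tau>"
  shows "mut_mass \<delta> \<nu> \<tau> = \<nu> * (exp (\<delta> * \<tau>) - 1) / \<delta>"
proof -
  have "((\<lambda>s. \<nu> * exp (\<delta> * s)) has_integral (\<nu> / \<delta> * exp (\<delta> * \<tau>) - \<nu> / \<delta> * exp (\<delta> * 0))) {0..\<tau>}"
    using assms by (intro fundamental_theorem_of_calculus_real) (auto intro!: derivative_eq_intros)
  moreover have "\<nu> / \<delta> * exp (\<delta> * \<tau>) - \<nu> / \<delta> * exp (\<delta> * 0) = \<nu> * (exp (\<delta> * \<tau>) - 1) / \<delta>"
    using assms(1) by (simp add: field_simps)
  ultimately show ?thesis
    unfolding mut_mass_def by (metis integral_unique)
qed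

definition bd_xi :: "real \<Rightarrow> real \<Rightarrow> real \<Rightarrow> real" where
  "bd_xi \<alpha> \<beta> t = \<alpha> * (exp ((\<alpha> - \<beta>) * t) - 1) / (\<alpha> * exp ((\<alpha> - \<beta>) * t) - \<beta>)"

definition bd_law :: "real \<Rightarrow> real \<Rightarrow> nat \<Rightarrow> real" where
  "bd_law q x n = (if n = 0 then q * x else (1 - q * x) * (1 - x) * x ^ (n - 1))"

context
  fixes \<alpha> \<beta> t :: real
  assumes rates: "0 \<le> \<beta>" "\<beta> < \<alpha>" and "0 \<le> t"
begin

lemma bd_denominator_pos: "0 < \<alpha> * exp ((\<alpha> - \<beta>) * t) - \<beta>"
proof -
  have "\<alpha> \<le> \<alpha> * exp ((\<alpha> - \<beta>) * t)"
    using rates \<open>0 \<le> t\<close> by simp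
  then show ?thesis
    using rates by linarith
qed

lemma one_minus_bd_xi: "1 - bd_xi \<alpha> \<beta> t = (\<alpha> - \<beta>) / (\<alpha> * exp ((\<alpha> - \<beta>) * t) - \<beta>)"
  using bd_denominator_pos by (simp add: bd_xi_def field_simps)

lemma one_minus_q_bd_xi:
  "1 - \<beta> / \<alpha> * bd_xi \<alpha> \<beta> t = (\<alpha> - \<beta>) * exp ((\<alpha> - \<beta>) * t) / (\<alpha> * exp ((\<alpha> - \<beta>) * t) - \<beta>)"
  using bd_denominator_pos rates by (simp add: bd_xi_def field_simps)

lemma bd_xi_bounds: "0 \<le> bd_xi \<alpha> \<beta> t \<and> bd_xi \<alpha> \<beta> t < 1"
proof
  show "0 \<le> bd_xi \<alpha> \<beta> t"
    using bd_denominator_pos rates \<open>0 \<le> t\<close> by (simp add: bd_xi_def)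
  have "0 < 1 - bd_xi \<alpha> \<beta> t"
    unfolding one_minus_bd_xi using bd_denominator_pos rates by simp
  then show "bd_xi \<alpha> \<beta> t < 1"
    by simp
qed

lemma bd_prob_eq_bd_law: "bd_prob \<alpha> \<beta> t n = bd_law (\<beta> / \<alpha>) (bd_xi \<alpha> \<beta> t) n"
proof -
  have "\<beta> * (exp ((\<alpha> - \<beta>) * t) - 1) / (\<alpha> * exp ((\<alpha> - \<beta>) * t) - \<beta>) =
      \<beta> / \<alpha> * bd_xi \<alpha> \<beta> t"
    using rates by (simp add: bd_xi_def)
  then show ?thesis
    by (simp add: bd_prob_def bd_law_def bd_xi_def[symmetric] Let_def)
qed

lemma exp_neg_eq_bd_xi:
  "exp (- (\<alpha> - \<beta>) * t) = (1 - bd_xi \<alpha> \<beta> t) / (1 - \<beta> / \<alpha> * bd_xi \<alpha> \<beta> t)"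
proof -
  have "exp (- (\<alpha> - \<beta>) * t) * exp ((\<alpha> - \<beta>) * t) = 1"
    by (simp add: algebra_simps flip: exp_add)
  then show ?thesis
    unfolding one_minus_bd_xi one_minus_q_bd_xi
    using bd_denominator_pos rates by (simp add: divide_simps)
qed

end

lemma bd_xi_has_real_derivative:
  assumes "0 \<le> \<beta>" "\<beta> < \<alpha>" "0 \<le> t"
  shows "(bd_xi \<alpha> \<beta> has_real_derivative
           \<alpha> * (1 - bd_xi \<alpha> \<beta> t) * (1 - \<beta> / \<alpha> * bd_xi \<alpha> \<beta> t)) (at t)"
proof -
  define D where "D = \<alpha> * exp ((\<alpha> - \<beta>) * t) - \<beta>"
  have "D \<noteq> 0"
    using bd_denominator_pos[OF assms] by (simp add: D_def)
  have "(bd_xi \<alpha> \<beta> has_real_derivative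
         \<alpha> * ((\<alpha> - \<beta>) * exp ((\<alpha> - \<beta>) * t)) * (\<alpha> - \<beta>) / D\<^sup>2) (at t)"
    unfolding bd_xi_def[abs_def] using \<open>D \<noteq> 0\<close>
    by (auto intro!: derivative_eq_intros simp: D_def field_simps power2_eq_square)
  moreover have "\<alpha> * (1 - bd_xi \<alpha> \<beta> t) * (1 - \<beta> / \<alpha> * bd_xi \<alpha> \<beta> t) =
      \<alpha> * ((\<alpha> - \<beta>) * exp ((\<alpha> - \<beta>) * t)) * (\<alpha> - \<beta>) / D\<^sup>2"
    unfolding one_minus_bd_xi[OF assms] one_minus_q_bd_xi[OF assms] D_def[symmetric]
    by (simp add: power2_eq_square)
  ultimately show ?thesis
    by simp
qed

lemma bd_law_bounds:
  assumes "0 \<le> q" "q \<le> 1" "0 \<le> x" "x \<le> 1"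
  shows "0 \<le> bd_law q x n \<and> bd_law q x n \<le> 1"
proof -
  have "q * x \<le> 1"
    using assms mult_mono[of q 1 x 1] by simp
  moreover have "x ^ (n - 1) \<le> 1"
    using assms by (simp add: power_le_one)
  ultimately show ?thesis
    using assms by (auto simp: bd_law_def intro!: mult_le_one)
qed

lemma continuous_on_bd_law_density:
  assumes "0 \<le> q" "q < 1"
  shows "continuous_on {0..1} (\<lambda>x. bd_law q x n / (1 - q * x)\<^sup>2)"
proof -
  have "(1 - q * x)\<^sup>2 \<noteq> 0" if "x \<in> {0..1}" for x
    using assms that mult_left_le[of x q] by auto
  then show ?thesis
    unfolding bd_law_def by (cases "n = 0") (auto intro!: continuous_intros)
qed

lemma has_integral_bd_xi_substitution:
  assumes "0 \<le> \<beta>" "\<beta> < \<alpha>" "0 \<le> \<tau>" and "continuous_on {0..1} f"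
  defines "\<xi> \<equiv> \<lambda>s. bd_xi \<alpha> \<beta> (\<tau> - s)"
  shows "((\<lambda>s. \<alpha> * (1 - \<xi> s) * (1 - \<beta> / \<alpha> * \<xi> s) * f (\<xi> s)) has_integral
           integral {0..bd_xi \<alpha> \<beta> \<tau>} f) {0..\<tau>}"
proof -
  define \<xi>' where "\<xi>' s = - \<alpha> * (1 - \<xi> s) * (1 - \<beta> / \<alpha> * \<xi> s)" for s
  have \<xi>_deriv: "(\<xi> has_real_derivative \<xi>' s) (at s)" if "s \<in> {0..\<tau>}" for s
  proof -
    have "0 \<le> \<tau> - s"
      using that by simp
    have "((\<lambda>s. bd_xi \<alpha> \<beta> (\<tau> - s)) has_real_derivative
        \<alpha> * (1 - bd_xi \<alpha> \<beta> (\<tau> - s)) * (1 - \<beta> / \<alpha> * bd_xi \<alpha> \<beta> (\<tau> - s)) * (- 1)) (at s)"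
      by (rule DERIV_chain2[where g = "\<lambda>s. \<tau> - s", OF bd_xi_has_real_derivative[OF assms(1,2) \<open>0 \<le> \<tau> - s\<close>]])
        (auto intro!: derivative_eq_intros)
    then show ?thesis
      by (simp add: \<xi>_def \<xi>'_def)
  qed
  \<comment> \<open>\<xi> decreases from \<open>bd_xi \<alpha> \<beta> \<tau>\<close> to 0: the substitution reverses orientation.\<close>
  have "((\<lambda>s. \<xi>' s *\<^sub>R f (\<xi> s)) has_integral
          integral {\<xi> 0..\<xi> \<tau>} f - integral {\<xi> \<tau>..\<xi> 0} f) {0..\<tau>}"
  proof (rule has_integral_substitution_general[where s = "{}" and c = 0 and d = 1])
    show "\<xi> ` {0..\<tau>} \<subseteq> {0..1}"
    proof
      fix x
      assume "x \<in> \<xi> ` {0..\<tau>}"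
      then obtain s where "s \<in> {0..\<tau>}" and "x = \<xi> s"
        by blast
      then show "x \<in> {0..1}"
        using bd_xi_bounds[OF assms(1,2), of "\<tau> - s"] by (simp add: \<xi>_def)
    qed
    show "continuous_on {0..\<tau>} \<xi>"
      using \<xi>_deriv by (meson DERIV_continuous_on has_field_derivative_at_within)
    show "(\<xi> has_real_derivative \<xi>' s) (at s within {0..\<tau>})" if "s \<in> {0..\<tau>} - {}" for s
      using \<xi>_deriv[of s] that by (simp add: has_field_derivative_at_within)
  qed (use assms in auto)
  moreover have "\<xi> \<tau> = 0" and "\<xi> 0 = bd_xi \<alpha> \<beta> \<tau>"
    by (simp_all add: \<xi>_def bd_xi_def)
  moreover have "integral {bd_xi \<alpha> \<beta> \<tau>..0} f = 0"
    using bd_xi_bounds[OF assms(1,2,3)] by (cases "bd_xi \<alpha> \<beta> \<tau> = 0") auto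
  ultimately have "((\<lambda>s. \<xi>' s * f (\<xi> s)) has_integral - integral {0..bd_xi \<alpha> \<beta> \<tau>} f) {0..\<tau>}"
    by simp
  then have "((\<lambda>s. - (\<xi>' s * f (\<xi> s))) has_integral - (- integral {0..bd_xi \<alpha> \<beta> \<tau>} f)) {0..\<tau>}"
    by (rule has_integral_neg)
  then show ?thesis
    by (simp add: \<xi>'_def)
qed

lemma exp_bd_prob_eq_bd_law_density:
  assumes "0 \<le> \<beta>" "\<beta> < \<alpha>" "0 \<le> t"
  defines "q \<equiv> \<beta> / \<alpha>" and "\<xi> \<equiv> bd_xi \<alpha> \<beta> t"
  shows "exp (- (\<alpha> - \<beta>) * t) * bd_prob \<alpha> \<beta> t n =
           (1 - \<xi>) * (1 - q * \<xi>) * (bd_law q \<xi> n / (1 - q * \<xi>)\<^sup>2)"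
proof -
  have "q * \<xi> \<le> q"
    using bd_xi_bounds[OF assms(1-3)] assms(1,2) by (intro mult_left_le) (auto simp: q_def \<xi>_def)
  moreover have "q < 1"
    using assms(1,2) by (simp add: q_def)
  ultimately have "q * \<xi> < 1"
    by linarith
  then show ?thesis
    unfolding exp_neg_eq_bd_xi[OF assms(1-3)] bd_prob_eq_bd_law[OF assms(1-3)]
      q_def[symmetric] \<xi>_def[symmetric]
    by (simp add: power2_eq_square)
qed

lemma clone_weight_integrand_has_integral:
  assumes "0 \<le> \<beta>" "\<beta> < \<alpha>" "0 \<le> \<tau>"
  defines "q \<equiv> \<beta> / \<alpha>"
  shows "((\<lambda>s. \<nu> * exp ((\<alpha> - \<beta>) * s) * bd_prob \<alpha> \<beta> (\<tau> - s) n) has_integral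
           \<nu> * exp ((\<alpha> - \<beta>) * \<tau>) / \<alpha> * integral {0..bd_xi \<alpha> \<beta> \<tau>} (\<lambda>x. bd_law q x n / (1 - q * x)\<^sup>2))
         {0..\<tau>}"
proof -
  define f where "f x = bd_law q x n / (1 - q * x)\<^sup>2" for x
  have "continuous_on {0..1} f"
    unfolding f_def q_def using assms(1,2) by (intro continuous_on_bd_law_density) auto
  from has_integral_mult_right[OF has_integral_bd_xi_substitution[OF assms(1-3) this], of "\<nu> * exp ((\<alpha> - \<beta>) * \<tau>) / \<alpha>"]
  have "((\<lambda>s. \<nu> * exp ((\<alpha> - \<beta>) * \<tau>) / \<alpha> *
      (\<alpha> * (1 - bd_xi \<alpha> \<beta> (\<tau> - s)) * (1 - q * bd_xi \<alpha> \<beta> (\<tau> - s)) * f (bd_xi \<alpha> \<beta> (\<tau> - s))))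
      has_integral \<nu> * exp ((\<alpha> - \<beta>) * \<tau>) / \<alpha> * integral {0..bd_xi \<alpha> \<beta> \<tau>} f) {0..\<tau>}"
    by (simp add: q_def)
  moreover have "\<nu> * exp ((\<alpha> - \<beta>) * s) * bd_prob \<alpha> \<beta> (\<tau> - s) n =
      \<nu> * exp ((\<alpha> - \<beta>) * \<tau>) / \<alpha> *
        (\<alpha> * (1 - bd_xi \<alpha> \<beta> (\<tau> - s)) * (1 - q * bd_xi \<alpha> \<beta> (\<tau> - s)) * f (bd_xi \<alpha> \<beta> (\<tau> - s)))"
    if "s \<in> {0..\<tau>}" for s
  proof -
    have "0 \<le> \<tau> - s"
      using that by simp
    have "exp ((\<alpha> - \<beta>) * s) = exp ((\<alpha> - \<beta>) * \<tau>) * exp (- (\<alpha> - \<beta>) * (\<tau> - s))"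
      by (simp add: algebra_simps flip: exp_add)
    then have "\<nu> * exp ((\<alpha> - \<beta>) * s) * bd_prob \<alpha> \<beta> (\<tau> - s) n =
        \<nu> * exp ((\<alpha> - \<beta>) * \<tau>) * (exp (- (\<alpha> - \<beta>) * (\<tau> - s)) * bd_prob \<alpha> \<beta> (\<tau> - s) n)"
      by (simp only: mult.assoc)
    also have "\<dots> = \<nu> * exp ((\<alpha> - \<beta>) * \<tau>) *
        ((1 - bd_xi \<alpha> \<beta> (\<tau> - s)) * (1 - q * bd_xi \<alpha> \<beta> (\<tau> - s)) * f (bd_xi \<alpha> \<beta> (\<tau> - s)))"
      unfolding exp_bd_prob_eq_bd_law_density[OF assms(1,2) \<open>0 \<le> \<tau> - s\<close>] by (simp add: f_def q_def)
    finally show ?thesis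
      using assms(1,2) by simp
  qed
  ultimately show ?thesis
    unfolding f_def by (subst has_integral_cong) auto
qed

lemma bd_prob_bounds:
  assumes "0 \<le> \<beta>" "\<beta> < \<alpha>" "0 \<le> t"
  shows "0 \<le> bd_prob \<alpha> \<beta> t n \<and> bd_prob \<alpha> \<beta> t n \<le> 1"
  unfolding bd_prob_eq_bd_law[OF assms]
  using assms bd_xi_bounds[OF assms] by (intro bd_law_bounds) auto

lemma clone_weight_bounds:
  assumes "0 \<le> \<beta>" "\<beta> < \<alpha>" "0 \<le> \<nu>" "0 \<le> \<tau>"
  shows "0 \<le> clone_weight \<alpha> \<beta> (\<alpha> - \<beta>) \<nu> \<tau> n \<and> clone_weight \<alpha> \<beta> (\<alpha> - \<beta>) \<nu> \<tau> n \<le> mut_mass (\<alpha> - \<beta>) \<nu> \<tau>"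
proof -
  obtain I where I: "((\<lambda>s. \<nu> * exp ((\<alpha> - \<beta>) * s) * bd_prob \<alpha> \<beta> (\<tau> - s) n) has_integral I) {0..\<tau>}"
    using clone_weight_integrand_has_integral[OF assms(1,2,4)] by blast
  have "((\<lambda>s. \<nu> * exp ((\<alpha> - \<beta>) * s)) has_integral mut_mass (\<alpha> - \<beta>) \<nu> \<tau>) {0..\<tau>}"
    unfolding mut_mass_def by (intro integrable_integral integrable_continuous_interval continuous_intros)
  moreover have "0 \<le> bd_prob \<alpha> \<beta> (\<tau> - s) n \<and> bd_prob \<alpha> \<beta> (\<tau> - s) n \<le> 1" if "s \<in> {0..\<tau>}" for s
    using that by (intro bd_prob_bounds assms) simp
  ultimately have "0 \<le> I \<and> I \<le> mut_mass (\<alpha> - \<beta>) \<nu> \<tau>"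
    using I assms(3) by (auto intro!: has_integral_nonneg[OF I] has_integral_le[OF I] mult_left_le)
  then show ?thesis
    using I by (simp add: clone_weight_def integral_unique)
qed

section \<open>Integrals of the clone-size density\<close>

lemma has_integral_bd_law_density_0:
  assumes "0 < q" "0 \<le> c" "q * c < 1"
  shows "((\<lambda>x. bd_law q x 0 / (1 - q * x)\<^sup>2) has_integral (ln (1 - q * c) + q * c / (1 - q * c)) / q) {0..c}"
proof -
  define F where "F x = (ln (1 - q * x) + 1 / (1 - q * x)) / q" for x
  have "((\<lambda>x. bd_law q x 0 / (1 - q * x)\<^sup>2) has_integral F c - F 0) {0..c}"
  proof (rule fundamental_theorem_of_calculus_real)
    fix x
    assume "x \<in> {0..c}"
    then have "q * x \<le> q * c"
      using assms(1) by (intro mult_left_mono) auto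
    then have "0 < 1 - q * x"
      using assms(3) by simp
    have "((\<lambda>x. ln (1 - q * x)) has_real_derivative - q / (1 - q * x)) (at x)"
      using \<open>0 < 1 - q * x\<close> by (auto intro!: derivative_eq_intros simp: field_simps)
    moreover have "((\<lambda>x. 1 / (1 - q * x)) has_real_derivative q / (1 - q * x)\<^sup>2) (at x)"
      using \<open>0 < 1 - q * x\<close> by (auto intro!: derivative_eq_intros simp: power2_eq_square)
    ultimately have "(F has_real_derivative (- q / (1 - q * x) + q / (1 - q * x)\<^sup>2) / q) (at x)"
      unfolding F_def[abs_def] by (intro DERIV_cdivide DERIV_add)
    moreover have "(- q / (1 - q * x) + q / (1 - q * x)\<^sup>2) / q = bd_law q x 0 / (1 - q * x)\<^sup>2"
    proof -
      define u where "u = 1 - q * x"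
      have "(- q / u + q / u\<^sup>2) / q = (1 - u) / u\<^sup>2"
        using \<open>0 < 1 - q * x\<close> assms(1) by (simp add: u_def[symmetric] field_simps power2_eq_square)
      then show ?thesis
        by (simp add: u_def bd_law_def)
    qed
    ultimately show "(F has_real_derivative bd_law q x 0 / (1 - q * x)\<^sup>2) (at x)"
      by simp
  qed (use assms in simp)
  moreover have "F c - F 0 = (ln (1 - q * c) + q * c / (1 - q * c)) / q"
    using assms by (simp add: F_def field_simps)
  ultimately show ?thesis
    by simp
qed

lemma hyp2f1_1_1_eq_integral:
  assumes "y \<le> 0"
  shows "hyp2f1 1 1 (2 + real k) y = real (Suc k) * integral {0..1} (\<lambda>t. (1 - t) ^ k / (1 - y * t))"
proof -
  have "Gamma (2 + real k) = fact (Suc k)"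
    using Gamma_fact[of "Suc k"] by (simp add: add_ac)
  moreover have "Gamma (2 + real k - 1) = fact k"
    using Gamma_fact[of k] by (simp add: add_ac)
  ultimately have "Gamma (2 + real k) / (Gamma 1 * Gamma (2 + real k - 1)) = real (Suc k)"
    by (simp add: fact_Suc del: of_nat_Suc)
  moreover have "integral {0..1} (\<lambda>t. t powr (1 - 1) * (1 - t) powr (2 + real k - 1 - 1) * (1 - y * t) powr (- 1))
      = integral {0..1} (\<lambda>t. (1 - t) ^ k / (1 - y * t))"
  proof (rule integral_spike[where S = "{0, 1}"])
    fix t :: real
    assume "t \<in> {0..1} - {0, 1}"
    moreover have "1 \<le> 1 - y * t" if "0 \<le> t"
      using assms that by (simp add: mult_nonpos_nonneg)
    ultimately show "(1 - t) ^ k / (1 - y * t) =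
        t powr (1 - 1) * (1 - t) powr (2 + real k - 1 - 1) * (1 - y * t) powr (- 1)"
      by (simp add: powr_realpow powr_neg_one)
  qed simp
  ultimately show ?thesis
    by (simp add: hyp2f1_def)
qed

lemma hyp2f1_1_1_at_0: "hyp2f1 1 1 (2 + real k) 0 = 1"
proof -
  define F :: "real \<Rightarrow> real" where "F t = - ((1 - t) ^ Suc k) / real (Suc k)" for t
  have "((\<lambda>t. (1 - t) ^ k) has_integral F 1 - F 0) {0..1}"
    unfolding F_def[abs_def]
    by (rule fundamental_theorem_of_calculus_real) (auto intro!: derivative_eq_intros simp del: power_Suc of_nat_Suc)
  then show ?thesis
    by (simp add: hyp2f1_1_1_eq_integral integral_unique F_def)
qed

lemma integral_reflect_scale:
  fixes f :: "real \<Rightarrow> real"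
  assumes "0 \<le> c" and "continuous_on {0..c} f"
  shows "integral {0..c} f = integral {0..1} (\<lambda>t. c * f (c * (1 - t)))"
proof -
  have "((\<lambda>t. (- c) *\<^sub>R f (c * (1 - t))) has_integral
          integral {c * (1 - 0)..c * (1 - 1)} f - integral {c * (1 - 1)..c * (1 - 0)} f) {0..1}"
  proof (rule has_integral_substitution_general[where s = "{}" and c = 0 and d = c])
    show "(\<lambda>t. c * (1 - t)) ` {0..1} \<subseteq> {0..c}"
    proof clarify
      fix t :: real
      assume "t \<in> {0..1}"
      then show "c * (1 - t) \<in> {0..c}"
        using assms(1) mult_left_le[of "1 - t" c] by auto
    qed
    show "((\<lambda>t. c * (1 - t)) has_real_derivative - c) (at t within {0..1})" for t
      by (auto intro!: derivative_eq_intros)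
  qed (use assms(2) in \<open>auto intro!: continuous_intros\<close>)
  moreover have "integral {c..0} f = 0"
    using assms(1) by (cases "c = 0") auto
  ultimately have "((\<lambda>t. - (- c * f (c * (1 - t)))) has_integral - (- integral {0..c} f)) {0..1}"
    by (intro has_integral_neg) simp
  then have "((\<lambda>t. c * f (c * (1 - t))) has_integral integral {0..c} f) {0..1}"
    by simp
  then show ?thesis
    by (rule integral_unique[symmetric])
qed

lemma has_integral_power_div_linear:
  assumes "0 \<le> q" "0 \<le> c" "q * c < 1"
  shows "((\<lambda>x. x ^ k / (1 - q * x)) has_integral
           c ^ Suc k / ((1 - q * c) * real (Suc k)) * hyp2f1 1 1 (2 + real k) (- (q * c / (1 - q * c))))
         {0..c}"
proof -
  define f where "f x = x ^ k / (1 - q * x)" for x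
  define y where "y = - (q * c / (1 - q * c))"
  have "y \<le> 0"
    using assms by (simp add: y_def)
  have "1 - q * x \<noteq> 0" if "x \<in> {0..c}" for x
    using assms that mult_left_mono[of x c q] by auto
  then have "continuous_on {0..c} f"
    unfolding f_def by (intro continuous_intros) auto
  have integrand_eq: "c * f (c * (1 - t)) = c ^ Suc k / (1 - q * c) * ((1 - t) ^ k / (1 - y * t))" for t
  proof -
    have "(1 - q * c) * (y * t) = - (q * c * t)"
      using assms(3) by (simp add: y_def)
    then have "1 - q * (c * (1 - t)) = (1 - q * c) * (1 - y * t)"
      by (simp add: algebra_simps)
    then show ?thesis
      by (simp add: f_def power_mult_distrib)
  qed
  have "integral {0..c} f = integral {0..1} (\<lambda>t. c ^ Suc k / (1 - q * c) * ((1 - t) ^ k / (1 - y * t)))"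
    unfolding integral_reflect_scale[OF assms(2) \<open>continuous_on {0..c} f\<close>] integrand_eq ..
  also have "\<dots> = c ^ Suc k / (1 - q * c) * integral {0..1} (\<lambda>t. (1 - t) ^ k / (1 - y * t))"
    by (rule integral_mult_right)
  also have "\<dots> = c ^ Suc k / ((1 - q * c) * real (Suc k)) * hyp2f1 1 1 (2 + real k) y"
    by (simp add: hyp2f1_1_1_eq_integral[OF \<open>y \<le> 0\<close>])
  finally show ?thesis
    using \<open>continuous_on {0..c} f\<close> integrable_continuous_interval[of 0 c f]
    by (simp add: f_def[abs_def] y_def has_integral_integral)
qed

lemma has_integral_bd_law_density_pos:
  assumes "0 \<le> q" "q < 1" "0 \<le> c" "c < 1" "0 < k"
  shows "((\<lambda>x. bd_law q x k / (1 - q * x)\<^sup>2) has_integral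
           c ^ k * (1 / real k - (1 - q) * c / ((1 - q * c) * real (k + 1)) *
             hyp2f1 1 1 (2 + real k) (- (q * c / (1 - q * c))))) {0..c}"
proof -
  have "q * c \<le> c"
    using assms by (simp add: mult_left_le_one_le)
  then have "q * c < 1"
    using assms(4) by linarith
  have "((\<lambda>x. x ^ (k - 1)) has_integral c ^ k / real k - 0 ^ k / real k) {0..c}"
    using assms(3,5) by (intro fundamental_theorem_of_calculus_real) (auto intro!: derivative_eq_intros)
  moreover have "((\<lambda>x. (1 - q) * (x ^ k / (1 - q * x))) has_integral
      (1 - q) * (c ^ Suc k / ((1 - q * c) * real (Suc k)) * hyp2f1 1 1 (2 + real k) (- (q * c / (1 - q * c)))))
      {0..c}"
    using assms(1,3) \<open>q * c < 1\<close> by (intro has_integral_mult_right has_integral_power_div_linear)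
  ultimately have "((\<lambda>x. x ^ (k - 1) - (1 - q) * (x ^ k / (1 - q * x))) has_integral
      c ^ k * (1 / real k - (1 - q) * c / ((1 - q * c) * real (k + 1)) *
        hyp2f1 1 1 (2 + real k) (- (q * c / (1 - q * c))))) {0..c}"
    by (rule has_integral_eq_rhs[OF has_integral_diff]) (use assms(5) in \<open>simp add: field_simps\<close>)
  moreover have "x ^ (k - 1) - (1 - q) * (x ^ k / (1 - q * x)) = bd_law q x k / (1 - q * x)\<^sup>2"
    if "x \<in> {0..c}" for x
  proof -
    have "q * x \<le> q * c"
      using that assms(1) by (intro mult_left_mono) auto
    then have "1 - q * x \<noteq> 0"
      using \<open>q * c < 1\<close> by simp
    then have "bd_law q x k / (1 - q * x)\<^sup>2 = (1 - x) * x ^ (k - 1) / (1 - q * x)"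
      using assms(5) by (simp add: bd_law_def power2_eq_square)
    also have "\<dots> = x ^ (k - 1) - (1 - q) * (x * x ^ (k - 1) / (1 - q * x))"
      using \<open>1 - q * x \<noteq> 0\<close> by (simp add: field_simps)
    also have "x * x ^ (k - 1) = x ^ k"
      using assms(5) by (simp add: power_eq_if)
    finally show ?thesis
      by simp
  qed
  ultimately show ?thesis
    by (rule has_integral_eq[rotated])
qed

section \<open>The case gamma = 1\<close>

lemma gamma_one_horizon:
  fixes \<alpha> \<beta> N :: real
  assumes "\<beta> < \<alpha>" "1 < N"
  shows "0 \<le> ln N / (\<alpha> - \<beta>)" and "exp ((\<alpha> - \<beta>) * (ln N / (\<alpha> - \<beta>))) = N"
proof -
  show "0 \<le> ln N / (\<alpha> - \<beta>)"
    using assms by (simp add: zero_le_divide_iff)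
  show "exp ((\<alpha> - \<beta>) * (ln N / (\<alpha> - \<beta>))) = N"
    using assms by simp
qed

lemma mut_mass_gamma_one:
  fixes \<alpha> \<beta> \<nu> N :: real
  assumes "\<beta> < \<alpha>" "1 < N"
  shows "mut_mass (\<alpha> - \<beta>) \<nu> (ln N / (\<alpha> - \<beta>)) = \<nu> * (N - 1) / (\<alpha> - \<beta>)"
  using assms by (simp add: mut_mass_eq gamma_one_horizon)

lemma bd_xi_gamma_one:
  fixes \<alpha> \<beta> N :: real
  assumes "0 \<le> \<beta>" "\<beta> < \<alpha>" "1 < N"
  defines "q \<equiv> \<beta> / \<alpha>" and "\<phi> \<equiv> 1 - 1 / N"
  shows "bd_xi \<alpha> \<beta> (ln N / (\<alpha> - \<beta>)) = \<phi> / (1 - q * (1 - \<phi>))"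
proof -
  have "\<alpha> * 1 < \<alpha> * N"
    using assms(1-3) by (intro mult_strict_left_mono) auto
  then have "N * \<alpha> \<noteq> \<beta>" "N * \<alpha> - \<beta> \<noteq> 0"
    using assms(2) by (simp_all add: mult.commute)
  then show ?thesis
    unfolding bd_xi_def gamma_one_horizon(2)[OF assms(2,3)]
    using assms(1-3) by (simp add: q_def \<phi>_def field_simps)
qed

lemma clone_weight_gamma_one:
  fixes \<alpha> \<beta> \<nu> N :: real
  assumes "0 \<le> \<beta>" "\<beta> < \<alpha>" "1 < N"
  defines "q \<equiv> \<beta> / \<alpha>" and "\<theta> \<equiv> N * (\<nu> / \<alpha>)" and "\<phi> \<equiv> 1 - 1 / N"
  shows "clone_weight \<alpha> \<beta> (\<alpha> - \<beta>) \<nu> (ln N / (\<alpha> - \<beta>)) n =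
           \<theta> * integral {0..\<phi> / (1 - q * (1 - \<phi>))} (\<lambda>x. bd_law q x n / (1 - q * x)\<^sup>2)"
proof -
  have "clone_weight \<alpha> \<beta> (\<alpha> - \<beta>) \<nu> (ln N / (\<alpha> - \<beta>)) n =
      \<nu> * N / \<alpha> * integral {0..bd_xi \<alpha> \<beta> (ln N / (\<alpha> - \<beta>))} (\<lambda>x. bd_law q x n / (1 - q * x)\<^sup>2)"
    using clone_weight_integrand_has_integral[OF assms(1,2) gamma_one_horizon(1)[OF assms(2,3)], of \<nu> n]
    unfolding clone_weight_def gamma_one_horizon(2)[OF assms(2,3)] q_def by (rule integral_unique)
  then show ?thesis
    using bd_xi_gamma_one[OF assms(1-3)] by (simp add: \<theta>_def q_def \<phi>_def)
qed

lemma horizon_xi_ratios: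
  fixes q \<phi> :: real
  assumes "0 \<le> q" "q < 1" "0 \<le> \<phi>"
  defines "c \<equiv> \<phi> / (1 - q * (1 - \<phi>))"
  shows "(1 - q) * c / (1 - q * c) = \<phi>"
    and "q * c / (1 - q * c) = \<phi> * q / (1 - q)"
    and "ln (1 - q * c) = - ln (1 + \<phi> * q / (1 - q))"
proof -
  define A where "A = 1 - q * (1 - \<phi>)"
  have "q * (1 - \<phi>) < 1"
    using assms(1-3) mult_left_le[of "1 - \<phi>" q] mult_nonneg_nonpos[of q "1 - \<phi>"]
    by (cases "\<phi> \<le> 1") auto
  then have "0 < A"
    by (simp add: A_def)
  have c: "c = \<phi> / A"
    by (simp add: c_def A_def)
  have "1 - q * c = (1 - q) / A"
    using \<open>0 < A\<close> by (simp add: c A_def field_simps)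
  moreover have "1 + \<phi> * q / (1 - q) = A / (1 - q)"
    using assms(2) by (simp add: A_def field_simps)
  ultimately show "(1 - q) * c / (1 - q * c) = \<phi>" "q * c / (1 - q * c) = \<phi> * q / (1 - q)"
    and "ln (1 - q * c) = - ln (1 + \<phi> * q / (1 - q))"
    using assms(2) \<open>0 < A\<close> by (simp_all add: c ln_div)
qed

lemma clone_weight_gamma_one_pos:
  fixes \<alpha> \<beta> \<nu> N :: real
  assumes "0 \<le> \<beta>" "\<beta> < \<alpha>" "1 < N" "0 < k"
  defines "q \<equiv> \<beta> / \<alpha>" and "\<theta> \<equiv> N * (\<nu> / \<alpha>)" and "\<phi> \<equiv> 1 - 1 / N"
  shows "clone_weight \<alpha> \<beta> (\<alpha> - \<beta>) \<nu> (ln N / (\<alpha> - \<beta>)) k =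
           \<theta> * \<phi> ^ k / (1 - q * (1 - \<phi>)) ^ k *
             (1 / real k - \<phi> / real (k + 1) * hyp2f1 1 1 (2 + real k) (- \<phi> * q / (1 - q)))"
proof -
  define c where "c = \<phi> / (1 - q * (1 - \<phi>))"
  have q: "0 \<le> q" "q < 1" and "0 \<le> \<phi>"
    using assms(1-3) by (auto simp: q_def \<phi>_def)
  note ratios = horizon_xi_ratios[OF q \<open>0 \<le> \<phi>\<close>, folded c_def]
  have "0 \<le> c" "c < 1"
    using bd_xi_bounds[OF assms(1,2) gamma_one_horizon(1)[OF assms(2,3)]]
    by (simp_all add: c_def bd_xi_gamma_one[OF assms(1-3)] q_def \<phi>_def)
  have "clone_weight \<alpha> \<beta> (\<alpha> - \<beta>) \<nu> (ln N / (\<alpha> - \<beta>)) k =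
      \<theta> * (c ^ k * (1 / real k - (1 - q) * c / ((1 - q * c) * real (k + 1)) *
        hyp2f1 1 1 (2 + real k) (- (q * c / (1 - q * c)))))"
    unfolding clone_weight_gamma_one[OF assms(1-3)] q_def[symmetric] \<theta>_def[symmetric] \<phi>_def[symmetric]
      c_def[symmetric]
    using has_integral_bd_law_density_pos[OF q \<open>0 \<le> c\<close> \<open>c < 1\<close> assms(4)] by (simp add: integral_unique)
  also have "(1 - q) * c / ((1 - q * c) * real (k + 1)) = \<phi> / real (k + 1)"
    using ratios(1) by (metis divide_divide_eq_left)
  also have "- (q * c / (1 - q * c)) = - \<phi> * q / (1 - q)"
    using ratios(2) by simp
  finally show ?thesis
    by (simp add: c_def power_divide)
qed

lemma clone_weight_gamma_one_0:
  fixes \<alpha> \<beta> \<nu> N :: real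
  assumes "0 < \<beta>" "\<beta> < \<alpha>" "1 < N"
  defines "q \<equiv> \<beta> / \<alpha>" and "\<theta> \<equiv> N * (\<nu> / \<alpha>)" and "\<phi> \<equiv> 1 - 1 / N"
  shows "clone_weight \<alpha> \<beta> (\<alpha> - \<beta>) \<nu> (ln N / (\<alpha> - \<beta>)) 0 - mut_mass (\<alpha> - \<beta>) \<nu> (ln N / (\<alpha> - \<beta>)) =
           - \<theta> / q * ln (1 + \<phi> * q / (1 - q))"
proof -
  define c where "c = \<phi> / (1 - q * (1 - \<phi>))"
  have q: "0 < q" "q < 1" and "0 \<le> \<phi>"
    using assms(1-3) by (auto simp: q_def \<phi>_def)
  note ratios = horizon_xi_ratios[OF less_imp_le[OF q(1)] q(2) \<open>0 \<le> \<phi>\<close>, folded c_def]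
  have "0 \<le> c" "c < 1"
    using bd_xi_bounds[OF less_imp_le[OF assms(1)] assms(2) gamma_one_horizon(1)[OF assms(2,3)]]
    by (simp_all add: c_def bd_xi_gamma_one[OF less_imp_le[OF assms(1)] assms(2,3)] q_def \<phi>_def)
  then have "q * c < 1"
    using q mult_left_le_one_le[of c q] by linarith
  have "clone_weight \<alpha> \<beta> (\<alpha> - \<beta>) \<nu> (ln N / (\<alpha> - \<beta>)) 0 = \<theta> * ((ln (1 - q * c) + q * c / (1 - q * c)) / q)"
    unfolding clone_weight_gamma_one[OF less_imp_le[OF assms(1)] assms(2,3)] q_def[symmetric] \<theta>_def[symmetric]
      \<phi>_def[symmetric] c_def[symmetric]
    using has_integral_bd_law_density_0[OF q(1) \<open>0 \<le> c\<close> \<open>q * c < 1\<close>] by (simp add: integral_unique)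
  also have "\<dots> = \<theta> / q * ln (1 - q * c) + \<theta> / q * (q * c / (1 - q * c))"
    by (simp add: add_divide_distrib distrib_left)
  also have "\<dots> = - \<theta> / q * ln (1 + \<phi> * q / (1 - q)) + \<theta> * \<phi> / (1 - q)"
    unfolding ratios(2,3) using q by simp
  also have "\<theta> * \<phi> / (1 - q) = mut_mass (\<alpha> - \<beta>) \<nu> (ln N / (\<alpha> - \<beta>))"
    using assms(1-3) by (simp add: mut_mass_gamma_one \<theta>_def \<phi>_def q_def field_simps)
  finally show ?thesis
    by simp
qed

lemma clone_weight_gamma_one_0_pure_birth:
  fixes \<alpha> \<nu> N :: real
  assumes "0 < \<alpha>" "1 < N"
  shows "clone_weight \<alpha> 0 \<alpha> \<nu> (ln N / \<alpha>) 0 - mut_mass \<alpha> \<nu> (ln N / \<alpha>) = - N * (\<nu> / \<alpha>) * (1 - 1 / N)"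
proof -
  have "clone_weight \<alpha> 0 \<alpha> \<nu> (ln N / \<alpha>) 0 = 0"
    by (simp add: clone_weight_def bd_prob_def)
  moreover have "mut_mass \<alpha> \<nu> (ln N / \<alpha>) = \<nu> * (N - 1) / \<alpha>"
    using mut_mass_gamma_one[of 0 \<alpha> N \<nu>] assms by simp
  moreover have "0 - \<nu> * (N - 1) / \<alpha> = - N * (\<nu> / \<alpha>) * (1 - 1 / N)"
    using assms by (simp add: field_simps)
  ultimately show ?thesis
    by simp
qed

lemma clone_weight_log_coeff_gamma_one:
  fixes \<alpha> \<beta> \<nu> N :: real
  assumes "0 \<le> \<beta>" "\<beta> < \<alpha>" "1 < N"
  defines "q \<equiv> \<beta> / \<alpha>" and "\<theta> \<equiv> N * (\<nu> / \<alpha>)" and "\<phi> \<equiv> 1 - 1 / N"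
  shows "clone_weight \<alpha> \<beta> (\<alpha> - \<beta>) \<nu> (ln N / (\<alpha> - \<beta>)) k -
           (if k = 0 then mut_mass (\<alpha> - \<beta>) \<nu> (ln N / (\<alpha> - \<beta>)) else 0) =
         (if q = 0 then
            (if k = 0 then - \<theta> * \<phi>
             else \<theta> * (\<phi> ^ k / real k - \<phi> ^ (k + 1) / real (k + 1)))
          else
            (if k = 0 then - \<theta> / q * ln (1 + \<phi> * q / (1 - q))
             else \<theta> * \<phi> ^ k / (1 - q * (1 - \<phi>)) ^ k *
                  (1 / real k - \<phi> / real (k + 1) *
                     hyp2f1 1 1 (2 + real k) (- \<phi> * q / (1 - q)))))"
proof -
  have "q = 0 \<longleftrightarrow> \<beta> = 0"
    using assms(1,2) by (auto simp: q_def)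
  show ?thesis
  proof (cases "\<beta> = 0"; cases "k = 0")
    assume "\<beta> = 0" "k = 0"
    then show ?thesis
      using clone_weight_gamma_one_0_pure_birth[of \<alpha> N \<nu>] assms(2,3) \<open>q = 0 \<longleftrightarrow> \<beta> = 0\<close>
      by (simp add: \<theta>_def \<phi>_def)
  next
    assume "\<beta> = 0" "k \<noteq> 0"
    then have "clone_weight \<alpha> \<beta> (\<alpha> - \<beta>) \<nu> (ln N / (\<alpha> - \<beta>)) k = \<theta> * \<phi> ^ k * (1 / real k - \<phi> / real (k + 1))"
      using clone_weight_gamma_one_pos[OF assms(1-3), of k \<nu>]
      by (simp add: q_def \<theta>_def \<phi>_def hyp2f1_1_1_at_0)
    then show ?thesis
      using \<open>\<beta> = 0\<close> \<open>k \<noteq> 0\<close> \<open>q = 0 \<longleftrightarrow> \<beta> = 0\<close> by (simp add: algebra_simps)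
  next
    assume "\<beta> \<noteq> 0" "k = 0"
    then show ?thesis
      using clone_weight_gamma_one_0[of \<beta> \<alpha> N \<nu>] assms(1-3) \<open>q = 0 \<longleftrightarrow> \<beta> = 0\<close>
      by (simp add: q_def \<theta>_def \<phi>_def)
  next
    assume "\<beta> \<noteq> 0" "k \<noteq> 0"
    then show ?thesis
      using clone_weight_gamma_one_pos[OF assms(1-3), of k \<nu>] \<open>q = 0 \<longleftrightarrow> \<beta> = 0\<close>
      by (simp add: q_def \<theta>_def \<phi>_def)
  qed
qed

theorem mainTheorem6:
  fixes \<delta> \<nu> \<alpha> \<beta> N :: real
  assumes "\<delta> > 0" and "\<nu> > 0" and "\<beta> \<ge> 0" and "\<alpha> > \<beta>" and "N > 1"
    and "\<delta> / (\<alpha> - \<beta>) = 1"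
  defines "q \<equiv> \<beta> / \<alpha>" and "\<mu> \<equiv> \<nu> / \<alpha>"
  defines "\<theta> \<equiv> N * \<mu>" and "\<phi> \<equiv> 1 - 1 / N"
  defines "qc \<equiv> (\<lambda>k::nat.
      if q = 0 then
        (if k = 0 then - \<theta> * \<phi>
         else \<theta> * (\<phi> ^ k / real k - \<phi> ^ (k + 1) / real (k + 1)))
      else
        (if k = 0 then - \<theta> / q * ln (1 + \<phi> * q / (1 - q))
         else \<theta> * \<phi> ^ k / (1 - q * (1 - \<phi>)) ^ k *
              (1 / real k - \<phi> / real (k + 1) *
                 hyp2f1 1 1 (2 + real k) (- \<phi> * q / (1 - q)))))"
  shows "(\<exists>r>0. \<forall>z::real. \<bar>z\<bar> < r \<longrightarrow>
            (\<lambda>k. qc k * z ^ k) sums ln (pgfB \<alpha> \<beta> \<delta> \<nu> N z)) \<and>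
         probB \<alpha> \<beta> \<delta> \<nu> N 0 = exp (qc 0) \<and>
         (\<forall>n\<ge>1. probB \<alpha> \<beta> \<delta> \<nu> N n =
           1 / real n * (\<Sum>k<n. real (n - k) * qc (n - k) * probB \<alpha> \<beta> \<delta> \<nu> N k))"
proof -
  have \<delta>: "\<delta> = \<alpha> - \<beta>"
    using assms(4,6) by (simp add: field_simps)
  define w where "w = clone_weight \<alpha> \<beta> \<delta> \<nu> (ln N / \<delta>)"
  define M where "M = mut_mass \<delta> \<nu> (ln N / \<delta>)"
  have probB: "exp (- M) * exp_series_coeff w n = probB \<alpha> \<beta> \<delta> \<nu> N n" for n
    by (simp add: probB_def Let_def exp_series_coeff_def w_def M_def)
  have w_nonneg: "0 \<le> w n" and w_le: "w n \<le> M" for n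
    using clone_weight_bounds[of \<beta> \<alpha> \<nu> "ln N / \<delta>" n] gamma_one_horizon(1)[of \<beta> \<alpha> N] assms(2-5)
    by (simp_all add: w_def M_def \<delta>)
  have qc: "qc k = w k - (if k = 0 then M else 0)" for k
    unfolding assms(7-11) w_def M_def \<delta>
    by (rule clone_weight_log_coeff_gamma_one[symmetric]) (use assms(3-5) in auto)
  note log_coeffs = compound_poisson_log_coeffs[where w = w, OF w_nonneg w_le qc, unfolded probB]
  have "(\<lambda>k. qc k * z ^ k) sums ln (pgfB \<alpha> \<beta> \<delta> \<nu> N z)" if "\<bar>z\<bar> < 1" for z
    using log_coeffs(1)[OF that] by (simp add: pgfB_def)
  then show ?thesis
    using log_coeffs(2,3) by (auto intro!: exI[of _ 1])
qed

end
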